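(* Let $S=\{(x_1,y_1),\dots,(x_m,y_m)\}\in(\mathcal X\times[-B,B])^m$ and let $L:\mathbb R\times\mathbb R\to\mathbb R$ be such that for every $y'$, $L(\cdot,y')$ is $c$-Lipschitz on $[-B,B]$, i.e. $|L(y_1,y')-L(y_2,y')|\le c|y_1-y_2|$ for all $y_1,y_2\in[-B,B]$. Then \[ \hat{\mathcal R}_S(L\circ\mathcal G):=\mathbb E_{\vec\sigma}\Big[\sup_{g\in\mathcal G}\frac1m\sum_{i=1}^m\sigma_i\,\mathbb E_{x'\sim N^{\mathrm{mir}}_{x_i}}\big[L(g_{x'}(x_i),y_i)\big]\Big]\;\le\; c\,\rho_S\,(\ln m+1)\,\hat{\mathcal R}^*_S(\mathcal G_{\mathrm{local}}), \] where $\vec\sigma$ is uniform on $\{-1,1\}^m$.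
   Context: $\mathcal X$ is an input space equipped with a reference measure (e.g. Lebesgue measure on $\mathbb R^d$) with respect to which densities are taken; $B>0$. For every $x\in\mathcal X$, $N^{\mathrm{mir}}_x$ is a probability distribution on $\mathcal X$ (the "mirrored neighborhood" of $x$) with density $p_{N^{\mathrm{mir}}_x}$. $\mathcal G_{\mathrm{local}}$ is a class of functions $h:\mathcal X\to[-B,B]$. $\mathcal G$ is a class of explainers $g:\mathcal X\times\mathcal X\to[-B,B]$, written $g_{x'}(\cdot):=g(x',\cdot)$, such that $g_{x'}\in\mathcal G_{\mathrm{local}}$ for every $x'\in\mathcal X$. All functions are assumed measurable so that the expectations are defined. For a finite set $T=\{x_1,\dots,x_n\}$, the empirical Rademacher complexity is $\hat{\mathcal R}_T(\mathcal G_{\mathrm{local}}):=\mathbb E_{\vec\sigma}\big[\sup_{h\in\mathcal G_{\mathrm{local}}}\frac1n\sum_{i=1}^n\sigma_ih(x_i)\big]$ with $\vec\sigma$ uniform on $\{-1,1\}^n$. The modified complexity is $\hat{\mathcal R}^*_S(\mathcal G_{\mathrm{local}}):=\max_{1\le i\le m}\max_{T\subseteq S,|T|=i}\hat{\mathcal R}_T(\mathcal G_{\mathrm{local}})\sqrt{i/m}$ (subsets taken over the inputs $x_j$ of $S$). The disjointedness factor is $\rho_S:=\int_{\mathcal X}\sqrt{\frac1m\sum_{i=1}^m\big(p_{N^{\mathrm{mir}}_{x_i}}(x')\big)^2}\,dx'$. *)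

theory Defs
  imports "HOL-Probability.Probability"
begin

definition sign_expect :: "nat set \<Rightarrow> ((nat \<Rightarrow> real) \<Rightarrow> real) \<Rightarrow> real" where
  "sign_expect I F = (\<Sum>\<sigma>\<in>I \<rightarrow>\<^sub>E {-1, 1::real}. F \<sigma>) / 2 ^ card I"

definition emp_rademacher :: "('a \<Rightarrow> real) set \<Rightarrow> (nat \<Rightarrow> 'a) \<Rightarrow> nat set \<Rightarrow> real" where
  "emp_rademacher H xs I =
     sign_expect I (\<lambda>\<sigma>. SUP h\<in>H. (1 / real (card I)) * (\<Sum>j\<in>I. \<sigma> j * h (xs j)))"

definition mod_rademacher :: "('a \<Rightarrow> real) set \<Rightarrow> (nat \<Rightarrow> 'a) \<Rightarrow> nat \<Rightarrow> real" where
  "mod_rademacher H xs m =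
     Max {emp_rademacher H xs I * sqrt (real (card I) / real m) | I.
            I \<subseteq> {..<m} \<and> 1 \<le> card I}"

definition mir_nbhd :: "'a measure \<Rightarrow> ('a \<Rightarrow> 'a \<Rightarrow> real) \<Rightarrow> 'a \<Rightarrow> 'a measure" where
  "mir_nbhd M p x = density M (\<lambda>x'. ennreal (p x x'))"

definition disj_factor :: "'a measure \<Rightarrow> ('a \<Rightarrow> 'a \<Rightarrow> real) \<Rightarrow> (nat \<Rightarrow> 'a) \<Rightarrow> nat \<Rightarrow> ennreal" where
  "disj_factor M p xs m =
     (\<integral>\<^sup>+ x'. ennreal (sqrt ((1 / real m) * (\<Sum>i<m. (p (xs i) x') ^ 2))) \<partial>M)"

definition loss_rademacher ::
  "'a measure \<Rightarrow> ('a \<Rightarrow> 'a \<Rightarrow> real) \<Rightarrow> (real \<Rightarrow> real \<Rightarrow> real) \<Rightarrow> ('a \<Rightarrow> 'a \<Rightarrow> real) set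
   \<Rightarrow> (nat \<Rightarrow> 'a) \<Rightarrow> (nat \<Rightarrow> real) \<Rightarrow> nat \<Rightarrow> real" where
  "loss_rademacher M p L G xs ys m =
     sign_expect {..<m} (\<lambda>\<sigma>. SUP g\<in>G. (1 / real m) *
        (\<Sum>i<m. \<sigma> i * (\<integral>x'. L (g x' (xs i)) (ys i) \<partial>(mir_nbhd M p (xs i)))))"

end

theory Submission
  imports Defs
begin

(*
  Fix, for every sign vector sigma, an explainer g_sigma in G that nearly attains the supremum.
  Writing the expectations over the mirrored neighbourhoods as integrals against the densities
  p(x_i, -), the average over sigma becomes an integral over x' of a Rademacher average with weights
  w_i = p(x_i, x'), in which every g_sigma(x', -) lies in G_local. For fixed x' the contraction
  principle replaces the loss by c times the explainer itself. Decomposing the weights into layers,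
  w = sum_k alpha_k 1_(T_k) with T_k the indices of the k+1 largest weights, turns the weighted
  average into sum_k alpha_k (k+1) R_(T_k) <= R* sqrt m sum_k alpha_k sqrt (k+1), and Abel summation
  with sum_(k<m) 1/(k+1) <= 1 + ln m bounds this by (1 + ln m) sqrt m |w|_2. Integrating the
  resulting bound c (1 + ln m) R* sqrt (sum_i w_i^2 / m) over x' yields the factor rho_S.
*)

section \<open>Averages over sign vectors\<close>

lemma sum_PiE_insert:
  assumes "j \<notin> I"
  shows "(\<Sum>\<sigma>\<in>insert j I \<rightarrow>\<^sub>E S. F \<sigma>) = (\<Sum>s\<in>S. \<Sum>\<sigma>\<in>I \<rightarrow>\<^sub>E S. F (\<sigma>(j:=s)))"
proof -
  have "(\<Sum>\<sigma>\<in>insert j I \<rightarrow>\<^sub>E S. F \<sigma>) = (\<Sum>(s, \<sigma>)\<in>S \<times> (I \<rightarrow>\<^sub>E S). F (\<sigma>(j:=s)))"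
    using inj_combinator[of j I "\<lambda>_. S"] assms
    by (simp add: PiE_insert_eq sum.reindex case_prod_unfold)
  then show ?thesis
    by (simp add: sum.cartesian_product)
qed

lemma card_sign_vectors: "finite I \<Longrightarrow> card (I \<rightarrow>\<^sub>E {-1, 1::real}) = 2 ^ card I"
  by (simp add: card_PiE numeral_2_eq_2)

lemma sum_sign_vectors_coordinate:
  assumes "finite I" "i \<in> I"
  shows "(\<Sum>\<sigma>\<in>I \<rightarrow>\<^sub>E {-1, 1::real}. \<sigma> i * a) = 0"
proof -
  have "(\<Sum>\<sigma>\<in>insert i (I - {i}) \<rightarrow>\<^sub>E {-1, 1::real}. \<sigma> i * a) = 0"
    by (subst sum_PiE_insert) auto
  then show ?thesis
    using assms(2) by (simp add: insert_absorb)
qed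

lemma sign_expect_mono:
  assumes "\<And>\<sigma>. \<sigma> \<in> I \<rightarrow>\<^sub>E {-1, 1} \<Longrightarrow> F \<sigma> \<le> G \<sigma>"
  shows "sign_expect I F \<le> sign_expect I G"
  unfolding sign_expect_def by (intro divide_right_mono sum_mono assms) auto

lemma sign_expect_sum_mult:
  "sign_expect I (\<lambda>\<sigma>. \<Sum>k\<in>K. c k * F k \<sigma>) = (\<Sum>k\<in>K. c k * sign_expect I (F k))"
  unfolding sign_expect_def
  by (subst sum.swap) (simp add: sum_divide_distrib sum_distrib_left)

lemma sign_expect_cong:
  "(\<And>\<sigma>. \<sigma> \<in> I \<rightarrow>\<^sub>E {-1, 1} \<Longrightarrow> F \<sigma> = G \<sigma>) \<Longrightarrow> sign_expect I F = sign_expect I G"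
  unfolding sign_expect_def by (metis sum.cong)

lemma sign_expect_mult_left: "sign_expect I (\<lambda>\<sigma>. c * F \<sigma>) = c * sign_expect I F"
  by (simp add: sign_expect_def sum_distrib_left)

lemma sign_expect_add_const:
  "finite I \<Longrightarrow> sign_expect I (\<lambda>\<sigma>. F \<sigma> + a) = sign_expect I F + a"
  by (simp add: sign_expect_def sum.distrib card_sign_vectors add_divide_distrib)

lemma sign_expect_linear_eq_0:
  assumes "finite I"
  shows "sign_expect I (\<lambda>\<sigma>. \<Sum>j\<in>I. \<sigma> j * a j) = 0"
  unfolding sign_expect_def
  by (subst sum.swap) (simp add: sum_sign_vectors_coordinate assms)

lemma sign_expect_cong_coordinates:
  assumes "finite I" "finite D"
    and dep: "\<And>\<sigma> \<sigma>'. (\<And>i. i \<in> I \<Longrightarrow> \<sigma> i = \<sigma>' i) \<Longrightarrow> F \<sigma> = F \<sigma>'"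
  shows "sign_expect (I \<union> D) F = sign_expect I F"
  using assms(2)
proof (induction D rule: finite_induct)
  case (insert j D)
  show ?case
  proof (cases "j \<in> I \<union> D")
    case False
    have "(\<Sum>\<sigma>\<in>insert j (I \<union> D) \<rightarrow>\<^sub>E {-1,1::real}. F \<sigma>)
        = (\<Sum>s\<in>{-1,1::real}. \<Sum>\<sigma>\<in>I \<union> D \<rightarrow>\<^sub>E {-1,1}. F (\<sigma>(j:=s)))"
      by (rule sum_PiE_insert[OF False])
    also have "\<dots> = 2 * (\<Sum>\<sigma>\<in>I \<union> D \<rightarrow>\<^sub>E {-1,1::real}. F \<sigma>)"
    proof -
      have "F (\<sigma>(j:=s)) = F \<sigma>" for \<sigma> s
        using False by (intro dep) auto
      then show ?thesis by simp
    qed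
    finally show ?thesis
      using False insert assms(1) by (simp add: sign_expect_def)
  qed (use insert in \<open>simp add: insert_absorb\<close>)
qed simp

lemma abs_sign_vector_le_1: "\<sigma> \<in> I \<rightarrow>\<^sub>E {-1, 1::real} \<Longrightarrow> i \<in> I \<Longrightarrow> \<bar>\<sigma> i\<bar> \<le> 1"
  by (fastforce simp: PiE_iff)

lemma abs_sum_mult_le:
  fixes \<sigma> a K :: "'i \<Rightarrow> real"
  assumes "\<And>i. i \<in> I \<Longrightarrow> \<bar>\<sigma> i\<bar> \<le> 1" "\<And>i. i \<in> I \<Longrightarrow> \<bar>a i\<bar> \<le> K i"
  shows "\<bar>\<Sum>i\<in>I. \<sigma> i * a i\<bar> \<le> (\<Sum>i\<in>I. K i)"
proof -
  have "\<bar>\<Sum>i\<in>I. \<sigma> i * a i\<bar> \<le> (\<Sum>i\<in>I. \<bar>\<sigma> i * a i\<bar>)"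
    by (rule sum_abs)
  also have "\<dots> \<le> (\<Sum>i\<in>I. K i)"
    using assms by (intro sum_mono) (auto simp: abs_mult intro: order_trans[OF mult_left_le_one_le])
  finally show ?thesis .
qed

lemma bdd_above_sign_sum:
  fixes \<sigma> :: "'i \<Rightarrow> real"
  assumes "\<sigma> \<in> I \<rightarrow>\<^sub>E {-1, 1}" "\<And>i h. i \<in> I \<Longrightarrow> h \<in> H \<Longrightarrow> \<bar>a i h\<bar> \<le> K i"
  shows "bdd_above ((\<lambda>h. \<Sum>i\<in>I. \<sigma> i * a i h) ` H)"
proof (rule bdd_aboveI2)
  fix h assume "h \<in> H"
  then have "\<bar>\<Sum>i\<in>I. \<sigma> i * a i h\<bar> \<le> (\<Sum>i\<in>I. K i)"
    using abs_sign_vector_le_1[OF assms(1)] assms(2) by (intro abs_sum_mult_le) auto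
  then show "(\<Sum>i\<in>I. \<sigma> i * a i h) \<le> (\<Sum>i\<in>I. K i)"
    by linarith
qed

section \<open>The contraction principle\<close>

lemma sum_signs_SUP_contraction:
  fixes R a b :: "'h \<Rightarrow> real"
  assumes "H \<noteq> {}" "\<And>h. h \<in> H \<Longrightarrow> \<bar>R h\<bar> \<le> K\<^sub>R" "\<And>h. h \<in> H \<Longrightarrow> \<bar>b h\<bar> \<le> K"
    and contract: "\<And>h h'. h \<in> H \<Longrightarrow> h' \<in> H \<Longrightarrow> \<bar>a h - a h'\<bar> \<le> \<bar>b h - b h'\<bar>"
  shows "(\<Sum>s\<in>{-1, 1::real}. SUP h\<in>H. R h + s * a h) \<le> (\<Sum>s\<in>{-1, 1::real}. SUP h\<in>H. R h + s * b h)"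
proof -
  let ?S = "(SUP h\<in>H. R h + b h) + (SUP h\<in>H. R h - b h)"
  have "R h + b h \<le> K\<^sub>R + K \<and> R h - b h \<le> K\<^sub>R + K" if "h \<in> H" for h
    using assms(2,3)[OF that] by (auto simp: abs_le_iff)
  then have bdd: "bdd_above ((\<lambda>h. R h + b h) ` H)" "bdd_above ((\<lambda>h. R h - b h) ` H)"
    by (auto intro!: bdd_aboveI2[where M = "K\<^sub>R + K"])
  have pair: "R h + a h + (R h' - a h') \<le> ?S" if "h \<in> H" "h' \<in> H" for h h'
  proof -
    have "R h + b h \<le> (SUP h\<in>H. R h + b h)" "R h' + b h' \<le> (SUP h\<in>H. R h + b h)"
      "R h - b h \<le> (SUP h\<in>H. R h - b h)" "R h' - b h' \<le> (SUP h\<in>H. R h - b h)"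
      using bdd that by (auto intro: cSUP_upper)
    then show ?thesis
      using contract[OF that] by (auto simp: abs_le_iff)
  qed
  have "R h' - a h' \<le> ?S - (SUP h\<in>H. R h + a h)" if "h' \<in> H" for h'
  proof -
    have "(SUP h\<in>H. R h + a h) \<le> ?S - (R h' - a h')"
      using assms(1) pair[OF _ that] by (intro cSUP_least) (auto simp: algebra_simps)
    then show ?thesis by linarith
  qed
  then have "(SUP h\<in>H. R h - a h) \<le> ?S - (SUP h\<in>H. R h + a h)"
    using assms(1) by (intro cSUP_least) auto
  then show ?thesis
    by simp
qed

text \<open>Ledoux--Talagrand contraction with a separate contraction in every coordinate; the summand R
  carries the coordinates already treated in the induction.\<close>

lemma sum_sign_vectors_SUP_contraction:
  fixes a b :: "nat \<Rightarrow> 'h \<Rightarrow> real" and K :: "nat \<Rightarrow> real"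
  assumes "finite I" "H \<noteq> {}"
    and bounded: "\<And>i h. i \<in> I \<Longrightarrow> h \<in> H \<Longrightarrow> \<bar>a i h\<bar> \<le> K i \<and> \<bar>b i h\<bar> \<le> K i"
    and contract: "\<And>i h h'. i \<in> I \<Longrightarrow> h \<in> H \<Longrightarrow> h' \<in> H \<Longrightarrow> \<bar>a i h - a i h'\<bar> \<le> \<bar>b i h - b i h'\<bar>"
    and "\<And>h. h \<in> H \<Longrightarrow> \<bar>R h\<bar> \<le> K\<^sub>R"
  shows "(\<Sum>\<sigma>\<in>I \<rightarrow>\<^sub>E {-1,1}. SUP h\<in>H. R h + (\<Sum>i\<in>I. \<sigma> i * a i h))
    \<le> (\<Sum>\<sigma>\<in>I \<rightarrow>\<^sub>E {-1,1}. SUP h\<in>H. R h + (\<Sum>i\<in>I. \<sigma> i * b i h))"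
  using assms(1,3,4,5)
proof (induction I arbitrary: R K\<^sub>R rule: finite_induct)
  case (insert j I)
  have split: "(\<Sum>i\<in>insert j I. (\<sigma>(j:=s)) i * f i h) = s * f j h + (\<Sum>i\<in>I. \<sigma> i * f i h)"
    for \<sigma> :: "nat \<Rightarrow> real" and s f h
  proof -
    have "(\<Sum>i\<in>I. (\<sigma>(j:=s)) i * f i h) = (\<Sum>i\<in>I. \<sigma> i * f i h)"
      using insert.hyps(2) by (intro sum.cong) auto
    then show ?thesis
      using insert.hyps by simp
  qed
  have K: "\<bar>a j h\<bar> \<le> K j" "\<bar>b j h\<bar> \<le> K j" if "h \<in> H" for h
    using insert.prems(1)[of j h] that by auto
  have "(\<Sum>\<sigma>\<in>insert j I \<rightarrow>\<^sub>E {-1,1}. SUP h\<in>H. R h + (\<Sum>i\<in>insert j I. \<sigma> i * a i h))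
      = (\<Sum>s\<in>{-1,1}. \<Sum>\<sigma>\<in>I \<rightarrow>\<^sub>E {-1,1}. SUP h\<in>H. (R h + s * a j h) + (\<Sum>i\<in>I. \<sigma> i * a i h))"
    by (simp only: sum_PiE_insert[OF insert.hyps(2)] split add.assoc)
  also have "\<dots> \<le> (\<Sum>s\<in>{-1,1}. \<Sum>\<sigma>\<in>I \<rightarrow>\<^sub>E {-1,1}. SUP h\<in>H. (R h + s * a j h) + (\<Sum>i\<in>I. \<sigma> i * b i h))"
  proof -
    have R': "\<bar>R h + s * a j h\<bar> \<le> K\<^sub>R + K j" if "s \<in> {-1, 1}" and h: "h \<in> H" for s :: real and h
      using that insert.prems(3)[OF h] K[OF h] by (auto simp: abs_le_iff)
    show ?thesis
      by (rule sum_mono, rule insert.IH[where K\<^sub>R = "K\<^sub>R + K j"]) (use R' insert.prems in auto)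
  qed
  also have "\<dots> = (\<Sum>\<sigma>\<in>I \<rightarrow>\<^sub>E {-1,1}. \<Sum>s\<in>{-1,1}. SUP h\<in>H. (R h + (\<Sum>i\<in>I. \<sigma> i * b i h)) + s * a j h)"
    by (subst sum.swap) (simp only: ac_simps)
  also have "\<dots> \<le> (\<Sum>\<sigma>\<in>I \<rightarrow>\<^sub>E {-1,1}. \<Sum>s\<in>{-1,1}. SUP h\<in>H. (R h + (\<Sum>i\<in>I. \<sigma> i * b i h)) + s * b j h)"
  proof (rule sum_mono)
    fix \<sigma> :: "nat \<Rightarrow> real" assume \<sigma>: "\<sigma> \<in> I \<rightarrow>\<^sub>E {-1,1}"
    have "\<bar>R h + (\<Sum>i\<in>I. \<sigma> i * b i h)\<bar> \<le> K\<^sub>R + (\<Sum>i\<in>I. K i)" if h: "h \<in> H" for h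
    proof -
      have "\<bar>\<Sum>i\<in>I. \<sigma> i * b i h\<bar> \<le> (\<Sum>i\<in>I. K i)"
        using abs_sign_vector_le_1[OF \<sigma>] insert.prems(1) h by (intro abs_sum_mult_le) auto
      then show ?thesis
        using insert.prems(3)[OF h] by linarith
    qed
    then show "(\<Sum>s\<in>{-1,1}. SUP h\<in>H. (R h + (\<Sum>i\<in>I. \<sigma> i * b i h)) + s * a j h)
        \<le> (\<Sum>s\<in>{-1,1}. SUP h\<in>H. (R h + (\<Sum>i\<in>I. \<sigma> i * b i h)) + s * b j h)"
      using K insert.prems(2) by (intro sum_signs_SUP_contraction assms(2)) auto
  qed
  also have "\<dots> = (\<Sum>s\<in>{-1,1}. \<Sum>\<sigma>\<in>I \<rightarrow>\<^sub>E {-1,1}. SUP h\<in>H. R h + (s * b j h + (\<Sum>i\<in>I. \<sigma> i * b i h)))"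
    by (subst sum.swap) (simp only: ac_simps)
  also have "\<dots> = (\<Sum>\<sigma>\<in>insert j I \<rightarrow>\<^sub>E {-1,1}. SUP h\<in>H. R h + (\<Sum>i\<in>insert j I. \<sigma> i * b i h))"
    by (simp only: sum_PiE_insert[OF insert.hyps(2)] split)
  finally show ?case .
qed simp

corollary sign_expect_SUP_contraction:
  fixes a b :: "nat \<Rightarrow> 'h \<Rightarrow> real" and K :: "nat \<Rightarrow> real"
  assumes "finite I" "H \<noteq> {}"
    and "\<And>i h. i \<in> I \<Longrightarrow> h \<in> H \<Longrightarrow> \<bar>a i h\<bar> \<le> K i \<and> \<bar>b i h\<bar> \<le> K i"
    and "\<And>i h h'. i \<in> I \<Longrightarrow> h \<in> H \<Longrightarrow> h' \<in> H \<Longrightarrow> \<bar>a i h - a i h'\<bar> \<le> \<bar>b i h - b i h'\<bar>"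
  shows "sign_expect I (\<lambda>\<sigma>. SUP h\<in>H. \<Sum>i\<in>I. \<sigma> i * a i h)
    \<le> sign_expect I (\<lambda>\<sigma>. SUP h\<in>H. \<Sum>i\<in>I. \<sigma> i * b i h)"
  using sum_sign_vectors_SUP_contraction[OF assms, where R = "\<lambda>_. 0" and K\<^sub>R = 0]
  unfolding sign_expect_def by (simp add: divide_right_mono)

section \<open>Rademacher complexity of subsamples\<close>

lemma sign_expect_emp_rademacher:
  assumes "T \<subseteq> I" "finite I"
  shows "sign_expect I (\<lambda>\<sigma>. SUP h\<in>H. (1 / real (card T)) * (\<Sum>j\<in>T. \<sigma> j * h (xs j)))
    = emp_rademacher H xs T"
proof -
  have "sign_expect (T \<union> (I - T)) (\<lambda>\<sigma>. SUP h\<in>H. (1 / real (card T)) * (\<Sum>j\<in>T. \<sigma> j * h (xs j)))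
    = emp_rademacher H xs T"
    unfolding emp_rademacher_def using assms finite_subset
    by (intro sign_expect_cong_coordinates) auto
  moreover have "T \<union> (I - T) = I"
    using assms(1) by blast
  ultimately show ?thesis
    by simp
qed

lemma emp_rademacher_le_mod_rademacher:
  assumes "T \<subseteq> {..<m}" "T \<noteq> {}"
  shows "emp_rademacher H xs T * sqrt (real (card T) / real m) \<le> mod_rademacher H xs m"
proof -
  have "finite {T. T \<subseteq> {..<m} \<and> 1 \<le> card T}"
    by (rule finite_subset[of _ "Pow {..<m}"]) auto
  moreover have "1 \<le> card T"
    using assms finite_subset by (fastforce simp: Suc_le_eq card_gt_0_iff)
  ultimately show ?thesis
    unfolding mod_rademacher_def using assms(1)
    by (intro Max_ge) (auto simp: setcompr_eq_image)
qed

lemma emp_rademacher_nonneg: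
  assumes "finite T" "H \<noteq> {}" "\<And>h j. h \<in> H \<Longrightarrow> j \<in> T \<Longrightarrow> \<bar>h (xs j)\<bar> \<le> B"
  shows "0 \<le> emp_rademacher H xs T"
proof -
  obtain h\<^sub>0 where h\<^sub>0: "h\<^sub>0 \<in> H"
    using assms(2) by blast
  have "0 = sign_expect T (\<lambda>\<sigma>. (1 / real (card T)) * (\<Sum>j\<in>T. \<sigma> j * h\<^sub>0 (xs j)))"
    by (simp only: sign_expect_mult_left sign_expect_linear_eq_0[OF assms(1)] mult_zero_right)
  also have "\<dots> \<le> emp_rademacher H xs T"
    unfolding emp_rademacher_def
  proof (intro sign_expect_mono cSUP_upper[OF h\<^sub>0] bdd_aboveI2)
    fix \<sigma> :: "nat \<Rightarrow> real" and h assume "\<sigma> \<in> T \<rightarrow>\<^sub>E {-1, 1}" "h \<in> H"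
    then have "\<bar>\<Sum>j\<in>T. \<sigma> j * h (xs j)\<bar> \<le> (\<Sum>j\<in>T. \<bar>B\<bar>)"
      using abs_sign_vector_le_1 assms(3) by (intro abs_sum_mult_le) (auto intro: order_trans[OF _ abs_ge_self])
    then show "(1 / real (card T)) * (\<Sum>j\<in>T. \<sigma> j * h (xs j)) \<le> \<bar>B\<bar>"
      by (cases "card T = 0") (auto simp: field_simps abs_le_iff)
  qed
  finally show ?thesis .
qed

lemma mod_rademacher_nonneg:
  assumes "1 \<le> m" "H \<noteq> {}" "\<And>h i. h \<in> H \<Longrightarrow> i < m \<Longrightarrow> \<bar>h (xs i)\<bar> \<le> B"
  shows "0 \<le> mod_rademacher H xs m"
proof -
  have "0 \<le> emp_rademacher H xs {0} * sqrt (real (card {0::nat}) / real m)"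
    using assms by (intro mult_nonneg_nonneg emp_rademacher_nonneg) auto
  also have "\<dots> \<le> mod_rademacher H xs m"
    using assms(1) by (intro emp_rademacher_le_mod_rademacher) auto
  finally show ?thesis .
qed

lemma card_mult_emp_rademacher_le:
  assumes "T \<subseteq> {..<m}" "T \<noteq> {}"
  shows "real (card T) * emp_rademacher H xs T
    \<le> mod_rademacher H xs m * sqrt (real m) * sqrt (real (card T))"
proof -
  have "0 < m"
    using assms by auto
  then have "sqrt (real (card T) / real m) * (sqrt (real m) * sqrt (real (card T))) = real (card T)"
    by (simp add: real_sqrt_divide)
  moreover have "emp_rademacher H xs T * sqrt (real (card T) / real m) * (sqrt (real m) * sqrt (real (card T)))
    \<le> mod_rademacher H xs m * (sqrt (real m) * sqrt (real (card T)))"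
    using emp_rademacher_le_mod_rademacher[OF assms] by (rule mult_right_mono) simp
  ultimately show ?thesis
    by (simp add: mult_ac)
qed

section \<open>Weighted Rademacher averages\<close>

lemma sum_inverse_Suc_le_1_plus_ln:
  assumes "1 \<le> n"
  shows "(\<Sum>k<n. 1 / (real k + 1)) \<le> 1 + ln (real n)"
proof -
  have "harm n - ln (real n) \<le> harm 1 - ln (real 1)"
    using assms by (intro euler_mascheroni_sequence_decreasing) auto
  then show ?thesis
    by (simp add: harm_altdef inverse_eq_divide add.commute)
qed

lemma sqrt_Suc_diff_le: "sqrt (real k + 1) - sqrt (real k) \<le> 1 / sqrt (real k + 1)"
proof -
  have "real k \<le> sqrt (real k) * sqrt (real k + 1)"
    using mult_left_mono[of "sqrt (real k)" "sqrt (real k + 1)" "sqrt (real k)"] by simp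
  then show ?thesis
    by (simp add: field_simps)
qed

lemma sum_diff_mult_sqrt_eq:
  fixes v :: "nat \<Rightarrow> real"
  shows "(\<Sum>k<n. (v k - v (Suc k)) * sqrt (real k + 1))
    = (\<Sum>k<n. v k * (sqrt (real k + 1) - sqrt (real k))) - v n * sqrt (real n)"
  by (induction n) (simp_all add: algebra_simps)

lemma sum_diff_mult_sqrt_le:
  fixes v :: "nat \<Rightarrow> real"
  assumes "1 \<le> m" "\<And>k. k < m \<Longrightarrow> 0 \<le> v k" "v m = 0"
  shows "(\<Sum>k<m. (v k - v (Suc k)) * sqrt (real k + 1)) \<le> (1 + ln (real m)) * sqrt (\<Sum>k<m. (v k)\<^sup>2)"
proof -
  have ln: "1 \<le> 1 + ln (real m)"
    using assms(1) by simp
  have "L2_set (\<lambda>k. 1 / sqrt (real k + 1)) {..<m} = sqrt (\<Sum>k<m. 1 / (real k + 1))"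
    unfolding L2_set_def by (simp add: power_divide)
  also have "\<dots> \<le> sqrt (1 + ln (real m))"
    using sum_inverse_Suc_le_1_plus_ln[OF assms(1)] by simp
  also have "\<dots> \<le> 1 + ln (real m)"
    using ln mult_right_mono[OF ln, of "1 + ln (real m)"]
    by (intro real_le_lsqrt) (auto simp: power2_eq_square)
  finally have harmonic: "L2_set (\<lambda>k. 1 / sqrt (real k + 1)) {..<m} \<le> 1 + ln (real m)" .
  have "(\<Sum>k<m. (v k - v (Suc k)) * sqrt (real k + 1)) = (\<Sum>k<m. v k * (sqrt (real k + 1) - sqrt (real k)))"
    using assms(3) by (simp add: sum_diff_mult_sqrt_eq)
  also have "\<dots> \<le> (\<Sum>k<m. v k * (1 / sqrt (real k + 1)))"
    using assms(2) by (intro sum_mono mult_left_mono sqrt_Suc_diff_le) auto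
  also have "\<dots> = (\<Sum>k<m. \<bar>v k\<bar> * \<bar>1 / sqrt (real k + 1)\<bar>)"
    using assms(2) by (intro sum.cong) auto
  also have "\<dots> \<le> L2_set v {..<m} * L2_set (\<lambda>k. 1 / sqrt (real k + 1)) {..<m}"
    by (rule L2_set_mult_ineq)
  also have "\<dots> \<le> L2_set v {..<m} * (1 + ln (real m))"
    using harmonic by (intro mult_left_mono L2_set_nonneg)
  finally show ?thesis
    by (simp add: L2_set_def mult.commute)
qed

lemma decreasing_enumeration:
  fixes u :: "nat \<Rightarrow> real"
  obtains \<pi> where "bij_betw \<pi> {..<m} {..<m}" "\<And>k l. k \<le> l \<Longrightarrow> l < m \<Longrightarrow> u (\<pi> l) \<le> u (\<pi> k)"
proof
  let ?ps = "sort_key (\<lambda>i. - u i) [0..<m]"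
  show "bij_betw ((!) ?ps) {..<m} {..<m}"
    by (rule bij_betw_nth) auto
  fix k l assume "k \<le> l" "l < m"
  then have "map (\<lambda>i. - u i) ?ps ! k \<le> map (\<lambda>i. - u i) ?ps ! l"
    by (intro sorted_nth_mono) auto
  then show "u (?ps ! l) \<le> u (?ps ! k)"
    using \<open>k \<le> l\<close> \<open>l < m\<close> by simp
qed

text \<open>T k collects the indices of the k+1 largest weights.\<close>

lemma nonneg_layer_decomposition:
  fixes u :: "nat \<Rightarrow> real"
  assumes m: "1 \<le> m" and u: "\<And>i. i < m \<Longrightarrow> 0 \<le> u i"
  obtains \<alpha> :: "nat \<Rightarrow> real" and T :: "nat \<Rightarrow> nat set"
  where "\<And>k. k < m \<Longrightarrow> 0 \<le> \<alpha> k" "\<And>k. k < m \<Longrightarrow> T k \<subseteq> {..<m}"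
    "\<And>k. k < m \<Longrightarrow> card (T k) = Suc k"
    "\<And>i. i < m \<Longrightarrow> u i = (\<Sum>k<m. \<alpha> k * indicator (T k) i)"
    "(\<Sum>k<m. \<alpha> k * sqrt (real k + 1)) \<le> (1 + ln (real m)) * sqrt (\<Sum>i<m. (u i)\<^sup>2)"
proof -
  obtain \<pi> where bij: "bij_betw \<pi> {..<m} {..<m}"
    and decr: "\<And>k l. k \<le> l \<Longrightarrow> l < m \<Longrightarrow> u (\<pi> l) \<le> u (\<pi> k)"
    using decreasing_enumeration by blast
  define v where "v k = (if k < m then u (\<pi> k) else 0)" for k
  define \<alpha> where "\<alpha> k = v k - v (Suc k)" for k
  define T where "T k = \<pi> ` {..k}" for k
  have inj: "inj_on \<pi> {..<m}" and \<pi>: "\<And>k. k < m \<Longrightarrow> \<pi> k < m"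
    using bij by (auto simp: bij_betw_def)
  have "0 \<le> \<alpha> k" if "k < m" for k
    using that decr[of k "Suc k"] u[OF \<pi>[OF that]] by (auto simp: \<alpha>_def v_def)
  moreover have "T k \<subseteq> {..<m}" if "k < m" for k
    using \<pi> that by (auto simp: T_def)
  moreover have "card (T k) = Suc k" if "k < m" for k
  proof -
    have "inj_on \<pi> {..k}"
      using that by (intro inj_on_subset[OF inj]) auto
    then show ?thesis
      by (simp add: T_def card_image)
  qed
  moreover have "u i = (\<Sum>k<m. \<alpha> k * indicator (T k) i)" if "i < m" for i
  proof -
    have "i \<in> \<pi> ` {..<m}"
      using bij that by (simp add: bij_betw_def)
    then obtain q where q: "q < m" "i = \<pi> q"
      by auto
    have "i \<in> T k \<longleftrightarrow> q \<in> {..k}" if "k < m" for k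
      unfolding T_def q(2) using that q(1) by (intro inj_on_image_mem_iff[OF inj]) auto
    then have "(\<Sum>k<m. \<alpha> k * indicator (T k) i) = (\<Sum>k<m. if k \<in> {q..} then \<alpha> k else 0)"
      by (intro sum.cong) auto
    also have "\<dots> = (\<Sum>k\<in>{..<m} \<inter> {q..}. \<alpha> k)"
      by (simp add: sum.inter_restrict)
    also have "{..<m} \<inter> {q..} = {q..<m}"
      by auto
    also have "(\<Sum>k\<in>{q..<m}. \<alpha> k) = (\<Sum>k\<in>{q..<m}. (- v (Suc k)) - (- v k))"
      by (simp add: \<alpha>_def)
    also have "\<dots> = v q - v m"
      using sum_Suc_diff'[OF less_imp_le[OF q(1)], of "\<lambda>k. - v k"] by simp
    finally show ?thesis
      using q by (simp add: v_def)
  qed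
  moreover have "(\<Sum>k<m. \<alpha> k * sqrt (real k + 1)) \<le> (1 + ln (real m)) * sqrt (\<Sum>i<m. (u i)\<^sup>2)"
  proof -
    have "(\<Sum>k<m. (v k)\<^sup>2) = (\<Sum>i<m. (u i)\<^sup>2)"
      using sum.reindex_bij_betw[OF bij, of "\<lambda>i. (u i)\<^sup>2"] by (simp add: v_def)
    then show ?thesis
      using sum_diff_mult_sqrt_le[OF m, of v] u \<pi> by (simp add: \<alpha>_def v_def)
  qed
  ultimately show ?thesis
    by (rule that)
qed

lemma sum_mult_eq_sum_layers:
  fixes \<sigma> f u \<alpha> :: "nat \<Rightarrow> real" and T :: "nat \<Rightarrow> nat set"
  assumes T: "\<And>k. k < m \<Longrightarrow> T k \<subseteq> {..<m}"
    and u: "\<And>i. i < m \<Longrightarrow> u i = (\<Sum>k<m. \<alpha> k * indicator (T k) i)"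
  shows "(\<Sum>i<m. \<sigma> i * (u i * f i)) = (\<Sum>k<m. \<alpha> k * (\<Sum>i\<in>T k. \<sigma> i * f i))"
proof -
  have "(\<Sum>i<m. \<sigma> i * (u i * f i)) = (\<Sum>i<m. \<Sum>k<m. \<alpha> k * (indicator (T k) i * (\<sigma> i * f i)))"
  proof (rule sum.cong[OF refl])
    fix i assume "i \<in> {..<m}"
    then have ui: "u i = (\<Sum>k<m. \<alpha> k * indicator (T k) i)"
      by (simp add: u)
    show "\<sigma> i * (u i * f i) = (\<Sum>k<m. \<alpha> k * (indicator (T k) i * (\<sigma> i * f i)))"
      unfolding ui sum_distrib_right sum_distrib_left by (rule sum.cong) (simp_all add: ac_simps)
  qed
  also have "\<dots> = (\<Sum>k<m. \<alpha> k * (\<Sum>i<m. indicator (T k) i * (\<sigma> i * f i)))"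
    by (subst sum.swap) (simp only: sum_distrib_left)
  also have "\<dots> = (\<Sum>k<m. \<alpha> k * (\<Sum>i\<in>T k. \<sigma> i * f i))"
  proof (rule sum.cong[OF refl])
    fix k assume "k \<in> {..<m}"
    then have "{..<m} \<inter> T k = T k"
      using T by blast
    then show "\<alpha> k * (\<Sum>i<m. indicator (T k) i * (\<sigma> i * f i)) = \<alpha> k * (\<Sum>i\<in>T k. \<sigma> i * f i)"
      by (simp add: indicator_def sum.inter_restrict[symmetric])
  qed
  finally show ?thesis .
qed

lemma SUP_nonneg_combination_le:
  fixes f :: "'k \<Rightarrow> 'h \<Rightarrow> real"
  assumes "H \<noteq> {}" "\<And>k. k \<in> K \<Longrightarrow> bdd_above (f k ` H)" "\<And>k. k \<in> K \<Longrightarrow> 0 \<le> \<alpha> k"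
  shows "(SUP h\<in>H. \<Sum>k\<in>K. \<alpha> k * f k h) \<le> (\<Sum>k\<in>K. \<alpha> k * (SUP h\<in>H. f k h))"
proof (rule cSUP_least)
  fix h assume "h \<in> H"
  then show "(\<Sum>k\<in>K. \<alpha> k * f k h) \<le> (\<Sum>k\<in>K. \<alpha> k * (SUP h\<in>H. f k h))"
    using assms(2,3) by (intro sum_mono mult_left_mono cSUP_upper) auto
qed (fact assms(1))

lemma sign_expect_SUP_weighted_le:
  fixes H :: "('a \<Rightarrow> real) set" and u :: "nat \<Rightarrow> real"
  assumes m: "1 \<le> m" and H: "H \<noteq> {}"
    and bounded: "\<And>h i. h \<in> H \<Longrightarrow> i < m \<Longrightarrow> \<bar>h (xs i)\<bar> \<le> B"
    and u: "\<And>i. i < m \<Longrightarrow> 0 \<le> u i"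
  shows "sign_expect {..<m} (\<lambda>\<sigma>. SUP h\<in>H. \<Sum>i<m. \<sigma> i * (u i * h (xs i)))
    \<le> mod_rademacher H xs m * sqrt (real m) * (1 + ln (real m)) * sqrt (\<Sum>i<m. (u i)\<^sup>2)"
proof (rule nonneg_layer_decomposition[OF m u])
  fix \<alpha> :: "nat \<Rightarrow> real" and T :: "nat \<Rightarrow> nat set"
  assume \<alpha>: "\<And>k. k < m \<Longrightarrow> 0 \<le> \<alpha> k" and T: "\<And>k. k < m \<Longrightarrow> T k \<subseteq> {..<m}"
    and card_T: "\<And>k. k < m \<Longrightarrow> card (T k) = Suc k"
    and u_eq: "\<And>i. i < m \<Longrightarrow> u i = (\<Sum>k<m. \<alpha> k * indicator (T k) i)"
    and \<alpha>_sum: "(\<Sum>k<m. \<alpha> k * sqrt (real k + 1)) \<le> (1 + ln (real m)) * sqrt (\<Sum>i<m. (u i)\<^sup>2)"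
  let ?S = "\<lambda>k \<sigma> h. (1 / real (card (T k))) * (\<Sum>j\<in>T k. \<sigma> j * h (xs j))"
  have layers: "(\<Sum>i<m. \<sigma> i * (u i * h (xs i))) = (\<Sum>k<m. (\<alpha> k * real (Suc k)) * ?S k \<sigma> h)"
    for \<sigma> :: "nat \<Rightarrow> real" and h
    using sum_mult_eq_sum_layers[OF T u_eq, of \<sigma> "\<lambda>i. h (xs i)"] card_T by (simp add: mult_ac)
  have bdd: "bdd_above ((?S k \<sigma>) ` H)" if k: "k < m" and \<sigma>: "\<sigma> \<in> {..<m} \<rightarrow>\<^sub>E {-1, 1}" for k \<sigma>
  proof (rule bdd_aboveI2)
    fix h assume h: "h \<in> H"
    have "\<bar>\<sigma> j\<bar> \<le> 1 \<and> \<bar>h (xs j)\<bar> \<le> B" if "j \<in> T k" for j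
    proof -
      have "j < m"
        using T[OF k] that by blast
      then show ?thesis
        using abs_sign_vector_le_1[OF \<sigma>] bounded[OF h] by simp
    qed
    then have "\<bar>\<Sum>j\<in>T k. \<sigma> j * h (xs j)\<bar> \<le> (\<Sum>j\<in>T k. B)"
      by (intro abs_sum_mult_le) auto
    then show "?S k \<sigma> h \<le> B"
      using card_T[OF k] by (auto simp: field_simps abs_le_iff)
  qed
  have "sign_expect {..<m} (\<lambda>\<sigma>. SUP h\<in>H. \<Sum>i<m. \<sigma> i * (u i * h (xs i)))
      \<le> sign_expect {..<m} (\<lambda>\<sigma>. \<Sum>k<m. (\<alpha> k * real (Suc k)) * (SUP h\<in>H. ?S k \<sigma> h))"
    unfolding layers using H bdd \<alpha> by (intro sign_expect_mono SUP_nonneg_combination_le) auto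
  also have "\<dots> = (\<Sum>k<m. (\<alpha> k * real (Suc k)) * emp_rademacher H xs (T k))"
    unfolding sign_expect_sum_mult
    using sign_expect_emp_rademacher[OF T, where H = H and xs = xs] by (intro sum.cong refl) simp
  also have "\<dots> \<le> (\<Sum>k<m. \<alpha> k * (mod_rademacher H xs m * sqrt (real m) * sqrt (real k + 1)))"
  proof (intro sum_mono)
    fix k assume k: "k \<in> {..<m}"
    then have "T k \<noteq> {}"
      using card_T[of k] by auto
    then have "real (card (T k)) * emp_rademacher H xs (T k) \<le> mod_rademacher H xs m * sqrt (real m) * sqrt (real (card (T k)))"
      using k by (intro card_mult_emp_rademacher_le T) auto
    then have "real (Suc k) * emp_rademacher H xs (T k) \<le> mod_rademacher H xs m * sqrt (real m) * sqrt (real k + 1)"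
      using card_T[of k] k by (simp add: add.commute)
    then show "\<alpha> k * real (Suc k) * emp_rademacher H xs (T k) \<le> \<alpha> k * (mod_rademacher H xs m * sqrt (real m) * sqrt (real k + 1))"
      using \<alpha> k by (simp add: mult.assoc mult_left_mono)
  qed
  also have "\<dots> = mod_rademacher H xs m * sqrt (real m) * (\<Sum>k<m. \<alpha> k * sqrt (real k + 1))"
    by (simp add: sum_distrib_left mult_ac)
  also have "\<dots> \<le> mod_rademacher H xs m * sqrt (real m) * ((1 + ln (real m)) * sqrt (\<Sum>i<m. (u i)\<^sup>2))"
    using \<alpha>_sum mod_rademacher_nonneg[of m H xs B] m H bounded by (intro mult_left_mono) auto
  finally show ?thesis
    by (simp add: mult.assoc)
qed

lemma lipschitz_interval_const_nonneg:
  fixes f :: "real \<Rightarrow> real"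
  assumes "0 < B" "\<And>a b. a \<in> {-B..B} \<Longrightarrow> b \<in> {-B..B} \<Longrightarrow> \<bar>f a - f b\<bar> \<le> c * \<bar>a - b\<bar>"
  shows "0 \<le> c"
proof -
  have "\<bar>f B - f (- B)\<bar> \<le> c * \<bar>B - (- B)\<bar>"
    by (intro assms(2)) (use assms(1) in auto)
  then have "0 \<le> c * \<bar>B - (- B)\<bar>"
    by (rule order_trans[OF abs_ge_zero])
  then show ?thesis
    using assms(1) by (simp add: zero_le_mult_iff)
qed

lemma abs_le_of_lipschitz_interval:
  fixes f :: "real \<Rightarrow> real"
  assumes "\<And>a b. a \<in> {-B..B} \<Longrightarrow> b \<in> {-B..B} \<Longrightarrow> \<bar>f a - f b\<bar> \<le> c * \<bar>a - b\<bar>"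
    and "0 \<le> c" "t \<in> {-B..B}"
  shows "\<bar>f t\<bar> \<le> \<bar>f 0\<bar> + c * B"
proof -
  have "\<bar>f t - f 0\<bar> \<le> c * \<bar>t - 0\<bar>"
    by (intro assms(1)) (use assms(3) in auto)
  also have "\<dots> \<le> c * B"
    using assms(2,3) by (intro mult_left_mono) auto
  finally show ?thesis
    by linarith
qed

lemma sign_expect_SUP_lipschitz_contraction:
  fixes H :: "('a \<Rightarrow> real) set" and v :: "nat \<Rightarrow> real" and loss :: "nat \<Rightarrow> real \<Rightarrow> real"
  assumes "finite I" "H \<noteq> {}" and c: "0 \<le> c"
    and H_bdd: "\<And>h i. h \<in> H \<Longrightarrow> i \<in> I \<Longrightarrow> h (xs i) \<in> {-B..B}"
    and v: "\<And>i. i \<in> I \<Longrightarrow> 0 \<le> v i"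
    and lip: "\<And>i a b. a \<in> {-B..B} \<Longrightarrow> b \<in> {-B..B} \<Longrightarrow> \<bar>loss i a - loss i b\<bar> \<le> c * \<bar>a - b\<bar>"
  shows "sign_expect I (\<lambda>\<sigma>. SUP h\<in>H. \<Sum>i\<in>I. \<sigma> i * (v i * loss i (h (xs i))))
    \<le> sign_expect I (\<lambda>\<sigma>. SUP h\<in>H. \<Sum>i\<in>I. \<sigma> i * ((v i * c) * h (xs i)))"
proof (rule sign_expect_SUP_contraction[OF assms(1,2), where K = "\<lambda>i. v i * (\<bar>loss i 0\<bar> + c * B)"])
  fix i h assume i: "i \<in> I" and h: "h \<in> H"
  have hB: "h (xs i) \<in> {-B..B}"
    using H_bdd[OF h i] .
  have "c * \<bar>h (xs i)\<bar> \<le> c * B"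
    using hB c by (intro mult_left_mono) auto
  moreover have "\<bar>loss i (h (xs i))\<bar> \<le> \<bar>loss i 0\<bar> + c * B"
    using lip c hB by (rule abs_le_of_lipschitz_interval)
  ultimately show "\<bar>v i * loss i (h (xs i))\<bar> \<le> v i * (\<bar>loss i 0\<bar> + c * B)
      \<and> \<bar>(v i * c) * h (xs i)\<bar> \<le> v i * (\<bar>loss i 0\<bar> + c * B)"
    using v[OF i] c by (auto simp: abs_mult mult.assoc intro: mult_left_mono)
next
  fix i h h' assume i: "i \<in> I" and "h \<in> H" "h' \<in> H"
  then have "\<bar>loss i (h (xs i)) - loss i (h' (xs i))\<bar> \<le> c * \<bar>h (xs i) - h' (xs i)\<bar>"
    using H_bdd by (intro lip) auto
  then show "\<bar>v i * loss i (h (xs i)) - v i * loss i (h' (xs i))\<bar> \<le> \<bar>(v i * c) * h (xs i) - (v i * c) * h' (xs i)\<bar>"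
    using v[OF i] c by (simp add: abs_mult mult.assoc mult_left_mono flip: right_diff_distrib)
qed

lemma sign_expect_weighted_lipschitz_le:
  fixes Glocal :: "('a \<Rightarrow> real) set" and w :: "nat \<Rightarrow> real"
    and hs :: "(nat \<Rightarrow> real) \<Rightarrow> 'a \<Rightarrow> real" and loss :: "nat \<Rightarrow> real \<Rightarrow> real"
  assumes m: "1 \<le> m" and c: "0 \<le> c"
    and Glocal_bdd: "\<And>h i. h \<in> Glocal \<Longrightarrow> i < m \<Longrightarrow> h (xs i) \<in> {-B..B}"
    and hs: "\<And>\<sigma>. \<sigma> \<in> {..<m} \<rightarrow>\<^sub>E {-1, 1} \<Longrightarrow> hs \<sigma> \<in> Glocal"
    and w: "\<And>i. i < m \<Longrightarrow> 0 \<le> w i"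
    and lip: "\<And>i a b. a \<in> {-B..B} \<Longrightarrow> b \<in> {-B..B} \<Longrightarrow> \<bar>loss i a - loss i b\<bar> \<le> c * \<bar>a - b\<bar>"
  shows "sign_expect {..<m} (\<lambda>\<sigma>. (1 / real m) * (\<Sum>i<m. \<sigma> i * (w i * loss i (hs \<sigma> (xs i)))))
    \<le> c * (ln (real m) + 1) * mod_rademacher Glocal xs m * sqrt ((1 / real m) * (\<Sum>i<m. (w i)\<^sup>2))"
proof -
  define v where "v i = w i / real m" for i
  have Glocal: "Glocal \<noteq> {}"
    using hs[of "\<lambda>i\<in>{..<m}. 1"] by auto
  have v: "0 \<le> v i" if "i < m" for i
    using w[OF that] by (simp add: v_def)
  have "sign_expect {..<m} (\<lambda>\<sigma>. (1 / real m) * (\<Sum>i<m. \<sigma> i * (w i * loss i (hs \<sigma> (xs i)))))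
      = sign_expect {..<m} (\<lambda>\<sigma>. \<Sum>i<m. \<sigma> i * (v i * loss i (hs \<sigma> (xs i))))"
    by (simp add: v_def sum_distrib_left mult_ac)
  also have "\<dots> \<le> sign_expect {..<m} (\<lambda>\<sigma>. SUP h\<in>Glocal. \<Sum>i<m. \<sigma> i * (v i * loss i (h (xs i))))"
  proof (intro sign_expect_mono cSUP_upper hs bdd_above_sign_sum)
    fix i h assume "i \<in> {..<m}" "h \<in> Glocal"
    then show "\<bar>v i * loss i (h (xs i))\<bar> \<le> v i * (\<bar>loss i 0\<bar> + c * B)"
      using abs_le_of_lipschitz_interval[OF lip c] Glocal_bdd v by (simp add: abs_mult mult_left_mono)
  qed
  also have "\<dots> \<le> sign_expect {..<m} (\<lambda>\<sigma>. SUP h\<in>Glocal. \<Sum>i<m. \<sigma> i * ((v i * c) * h (xs i)))"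
    using Glocal c Glocal_bdd v lip by (intro sign_expect_SUP_lipschitz_contraction) auto
  also have "\<dots> \<le> mod_rademacher Glocal xs m * sqrt (real m) * (1 + ln (real m)) * sqrt (\<Sum>i<m. (v i * c)\<^sup>2)"
  proof (rule sign_expect_SUP_weighted_le[OF m Glocal])
    show "\<bar>h (xs i)\<bar> \<le> B" if "h \<in> Glocal" "i < m" for h i
      using Glocal_bdd[OF that] by (simp add: abs_le_iff)
  qed (use v c in simp)
  also have "\<dots> = c * (ln (real m) + 1) * mod_rademacher Glocal xs m * sqrt ((1 / real m) * (\<Sum>i<m. (w i)\<^sup>2))"
  proof -
    have "real m * (\<Sum>i<m. (v i * c)\<^sup>2) = c\<^sup>2 * ((1 / real m) * (\<Sum>i<m. (w i)\<^sup>2))"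
      using m by (simp add: v_def sum_distrib_left power_mult_distrib power_divide power2_eq_square mult_ac)
    then have "sqrt (real m) * sqrt (\<Sum>i<m. (v i * c)\<^sup>2) = sqrt (c\<^sup>2) * sqrt ((1 / real m) * (\<Sum>i<m. (w i)\<^sup>2))"
      by (simp only: real_sqrt_mult[symmetric])
    then show ?thesis
      using c by (simp add: ac_simps)
  qed
  finally show ?thesis .
qed

section \<open>Integration and selections\<close>

lemma borel_measurable_continuous_on_comp:
  assumes "continuous_on A f" "g \<in> borel_measurable M" "\<And>x. x \<in> space M \<Longrightarrow> g x \<in> A"
  shows "(\<lambda>x. f (g x)) \<in> borel_measurable M"
proof -
  have "g \<in> measurable M (restrict_space borel A)"
    using assms(2,3) by (intro measurable_restrict_space2) auto
  then show ?thesis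
    using measurable_comp borel_measurable_continuous_on_restrict[OF assms(1)]
    by (auto simp: comp_def)
qed

text \<open>No integrability is needed: a non-integrable function has Bochner integral 0.\<close>

lemma ennreal_integral_le_nn_integral:
  fixes f :: "'a \<Rightarrow> real"
  shows "ennreal (integral\<^sup>L M f) \<le> (\<integral>\<^sup>+ x. ennreal (f x) \<partial>M)"
proof (cases "(\<integral>\<^sup>+ x. ennreal (f x) \<partial>M) = \<top>")
  case False
  then obtain r where r: "(\<integral>\<^sup>+ x. ennreal (f x) \<partial>M) = ennreal r" "0 \<le> r"
    by (cases "\<integral>\<^sup>+ x. ennreal (f x) \<partial>M") auto
  then have "integral\<^sup>L M f \<le> r"
    by (intro integral_real_bounded) auto
  then show ?thesis
    using r by (simp add: ennreal_leI)
qed simp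

lemma integral_sign_expect:
  assumes "finite I" "\<And>\<sigma>. \<sigma> \<in> I \<rightarrow>\<^sub>E {-1, 1} \<Longrightarrow> integrable M (f \<sigma>)"
  shows "(\<integral>x. sign_expect I (\<lambda>\<sigma>. f \<sigma> x) \<partial>M) = sign_expect I (\<lambda>\<sigma>. \<integral>x. f \<sigma> x \<partial>M)"
  unfolding sign_expect_def using assms by (simp add: integral_sum)

lemma sign_expect_SUP_le_of_selections:
  fixes A :: "(nat \<Rightarrow> real) \<Rightarrow> 'h \<Rightarrow> real"
  assumes "finite I" "H \<noteq> {}" "\<And>\<sigma>. \<sigma> \<in> I \<rightarrow>\<^sub>E {-1, 1} \<Longrightarrow> bdd_above (A \<sigma> ` H)"
    and selection: "\<And>s. (\<And>\<sigma>. \<sigma> \<in> I \<rightarrow>\<^sub>E {-1, 1} \<Longrightarrow> s \<sigma> \<in> H) \<Longrightarrow> sign_expect I (\<lambda>\<sigma>. A \<sigma> (s \<sigma>)) \<le> r"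
  shows "sign_expect I (\<lambda>\<sigma>. SUP h\<in>H. A \<sigma> h) \<le> r"
proof (rule field_le_epsilon)
  fix e :: real assume "0 < e"
  have "\<exists>s. \<forall>\<sigma>\<in>I \<rightarrow>\<^sub>E {-1, 1}. s \<sigma> \<in> H \<and> (SUP h\<in>H. A \<sigma> h) - e < A \<sigma> (s \<sigma>)"
  proof (rule bchoice, rule ballI)
    fix \<sigma> assume "\<sigma> \<in> I \<rightarrow>\<^sub>E {-1, 1::real}"
    moreover have "(SUP h\<in>H. A \<sigma> h) - e < (SUP h\<in>H. A \<sigma> h)"
      using \<open>0 < e\<close> by simp
    ultimately show "\<exists>h. h \<in> H \<and> (SUP h\<in>H. A \<sigma> h) - e < A \<sigma> h"
      using less_cSUP_iff[OF assms(2,3)] by blast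
  qed
  then obtain s where s: "\<And>\<sigma>. \<sigma> \<in> I \<rightarrow>\<^sub>E {-1, 1} \<Longrightarrow> s \<sigma> \<in> H \<and> (SUP h\<in>H. A \<sigma> h) - e < A \<sigma> (s \<sigma>)"
    by blast
  have "sign_expect I (\<lambda>\<sigma>. SUP h\<in>H. A \<sigma> h) \<le> sign_expect I (\<lambda>\<sigma>. A \<sigma> (s \<sigma>) + e)"
    using s by (intro sign_expect_mono) (simp add: less_imp_le algebra_simps)
  also have "\<dots> \<le> r + e"
    using selection s by (simp add: sign_expect_add_const assms(1))
  finally show "sign_expect I (\<lambda>\<sigma>. SUP h\<in>H. A \<sigma> h) \<le> r + e" .
qed

lemma ennreal_sign_expect_SUP_le_of_selections:
  fixes A :: "(nat \<Rightarrow> real) \<Rightarrow> 'h \<Rightarrow> real"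
  assumes "finite I" "H \<noteq> {}" "\<And>\<sigma>. \<sigma> \<in> I \<rightarrow>\<^sub>E {-1, 1} \<Longrightarrow> bdd_above (A \<sigma> ` H)"
    and selection: "\<And>s. (\<And>\<sigma>. \<sigma> \<in> I \<rightarrow>\<^sub>E {-1, 1} \<Longrightarrow> s \<sigma> \<in> H) \<Longrightarrow> ennreal (sign_expect I (\<lambda>\<sigma>. A \<sigma> (s \<sigma>))) \<le> R"
  shows "ennreal (sign_expect I (\<lambda>\<sigma>. SUP h\<in>H. A \<sigma> h)) \<le> R"
proof (cases "R = \<top>")
  case False
  then obtain r where r: "R = ennreal r" "0 \<le> r"
    by (cases R) auto
  have "sign_expect I (\<lambda>\<sigma>. SUP h\<in>H. A \<sigma> h) \<le> r"
  proof (rule sign_expect_SUP_le_of_selections[OF assms(1-3)])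
    fix s assume "\<And>\<sigma>. \<sigma> \<in> I \<rightarrow>\<^sub>E {-1, 1::real} \<Longrightarrow> s \<sigma> \<in> H"
    then have "ennreal (sign_expect I (\<lambda>\<sigma>. A \<sigma> (s \<sigma>))) \<le> ennreal r"
      using selection r(1) by simp
    then show "sign_expect I (\<lambda>\<sigma>. A \<sigma> (s \<sigma>)) \<le> r"
      using r(2) by (simp add: ennreal_le_iff)
  qed auto
  then show ?thesis
    using r by (simp add: ennreal_leI)
qed simp

section \<open>The loss class of mirrored explainers\<close>

locale mirrored_loss_class =
  fixes M :: "'a measure"
    and p :: "'a \<Rightarrow> 'a \<Rightarrow> real"
    and B c :: real
    and Glocal :: "('a \<Rightarrow> real) set"
    and G :: "('a \<Rightarrow> 'a \<Rightarrow> real) set"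
    and L :: "real \<Rightarrow> real \<Rightarrow> real"
    and m :: nat
    and xs :: "nat \<Rightarrow> 'a"
    and ys :: "nat \<Rightarrow> real"
  assumes B_pos: "B > 0"
    and dens_meas: "\<And>x. x \<in> space M \<Longrightarrow> p x \<in> borel_measurable M"
    and dens_nonneg: "\<And>x x'. x \<in> space M \<Longrightarrow> x' \<in> space M \<Longrightarrow> 0 \<le> p x x'"
    and dens_prob: "\<And>x. x \<in> space M \<Longrightarrow> prob_space (mir_nbhd M p x)"
    and Glocal_bdd: "\<And>h x. h \<in> Glocal \<Longrightarrow> x \<in> space M \<Longrightarrow> h x \<in> {-B..B}"
    and G_local: "\<And>g x'. g \<in> G \<Longrightarrow> x' \<in> space M \<Longrightarrow> g x' \<in> Glocal"
    and G_meas: "\<And>g x. g \<in> G \<Longrightarrow> x \<in> space M \<Longrightarrow> (\<lambda>x'. g x' x) \<in> borel_measurable M"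
    and G_ne: "G \<noteq> {}"
    and m_pos: "m \<ge> 1"
    and xs_in: "\<And>i. i < m \<Longrightarrow> xs i \<in> space M"
    and L_lip: "\<And>y' a b. a \<in> {-B..B} \<Longrightarrow> b \<in> {-B..B} \<Longrightarrow> \<bar>L a y' - L b y'\<bar> \<le> c * \<bar>a - b\<bar>"
begin

definition expected_loss :: "('a \<Rightarrow> 'a \<Rightarrow> real) \<Rightarrow> nat \<Rightarrow> real" where
  "expected_loss g i = (\<integral>x'. L (g x' (xs i)) (ys i) \<partial>mir_nbhd M p (xs i))"

lemma loss_rademacher_eq:
  "loss_rademacher M p L G xs ys m
    = sign_expect {..<m} (\<lambda>\<sigma>. SUP g\<in>G. (1 / real m) * (\<Sum>i<m. \<sigma> i * expected_loss g i))"
  unfolding loss_rademacher_def expected_loss_def ..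

lemma c_nonneg: "0 \<le> c"
  using B_pos L_lip by (rule lipschitz_interval_const_nonneg)

lemma explainer_in_interval: "g \<in> G \<Longrightarrow> x' \<in> space M \<Longrightarrow> i < m \<Longrightarrow> g x' (xs i) \<in> {-B..B}"
  using Glocal_bdd G_local xs_in by blast

lemma abs_loss_le:
  "g \<in> G \<Longrightarrow> x' \<in> space M \<Longrightarrow> i < m \<Longrightarrow> \<bar>L (g x' (xs i)) (ys i)\<bar> \<le> \<bar>L 0 (ys i)\<bar> + c * B"
  using L_lip c_nonneg explainer_in_interval by (rule abs_le_of_lipschitz_interval)

lemma loss_measurable:
  assumes "g \<in> G" "i < m"
  shows "(\<lambda>x'. L (g x' (xs i)) (ys i)) \<in> borel_measurable M"
proof (rule borel_measurable_continuous_on_comp[where f = "\<lambda>t. L t (ys i)" and g = "\<lambda>x'. g x' (xs i)"])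
  have "c-lipschitz_on {-B..B} (\<lambda>t. L t (ys i))"
    using L_lip c_nonneg by (intro lipschitz_onI) (auto simp: dist_real_def)
  then show "continuous_on {-B..B} (\<lambda>t. L t (ys i))"
    by (rule lipschitz_on_continuous_on)
qed (use assms G_meas xs_in explainer_in_interval in auto)

lemma
  assumes "g \<in> G" "i < m"
  shows integrable_weighted_loss: "integrable M (\<lambda>x'. p (xs i) x' * L (g x' (xs i)) (ys i))"
    and expected_loss_eq_integral: "expected_loss g i = (\<integral>x'. p (xs i) x' * L (g x' (xs i)) (ys i) \<partial>M)"
    and abs_expected_loss_le: "\<bar>expected_loss g i\<bar> \<le> \<bar>L 0 (ys i)\<bar> + c * B"
proof -
  let ?N = "mir_nbhd M p (xs i)"
  interpret N: prob_space ?N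
    using dens_prob xs_in assms(2) by blast
  have dens: "p (xs i) \<in> borel_measurable M" "AE x' in M. 0 \<le> p (xs i) x'"
    using dens_meas dens_nonneg xs_in assms(2) by auto
  have bound: "AE x' in ?N. \<bar>L (g x' (xs i)) (ys i)\<bar> \<le> \<bar>L 0 (ys i)\<bar> + c * B"
    using abs_loss_le assms by (auto simp: mir_nbhd_def)
  have "integrable ?N (\<lambda>x'. L (g x' (xs i)) (ys i))"
    using loss_measurable[OF assms] bound by (intro N.integrable_const_bound) (auto simp: mir_nbhd_def)
  then show "integrable M (\<lambda>x'. p (xs i) x' * L (g x' (xs i)) (ys i))"
    using integrable_density[OF loss_measurable[OF assms] dens] by (simp add: mir_nbhd_def)
  show "expected_loss g i = (\<integral>x'. p (xs i) x' * L (g x' (xs i)) (ys i) \<partial>M)"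
    using integral_density[OF loss_measurable[OF assms] dens] by (simp add: expected_loss_def mir_nbhd_def)
  have "expected_loss g i \<le> \<bar>L 0 (ys i)\<bar> + c * B" "- (\<bar>L 0 (ys i)\<bar> + c * B) \<le> expected_loss g i"
    unfolding expected_loss_def using bound \<open>integrable ?N _\<close>
    by (auto simp: abs_le_iff intro!: N.integral_le_const N.integral_ge_const elim: AE_mp)
  then show "\<bar>expected_loss g i\<bar> \<le> \<bar>L 0 (ys i)\<bar> + c * B"
    by linarith
qed

lemma bdd_above_loss_correlation:
  assumes "\<sigma> \<in> {..<m} \<rightarrow>\<^sub>E {-1, 1}"
  shows "bdd_above ((\<lambda>g. (1 / real m) * (\<Sum>i<m. \<sigma> i * expected_loss g i)) ` G)"
proof (rule bdd_aboveI2)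
  fix g assume "g \<in> G"
  then have "(\<Sum>i<m. \<sigma> i * expected_loss g i) \<le> (\<Sum>i<m. \<bar>L 0 (ys i)\<bar> + c * B)"
    using abs_sign_vector_le_1[OF assms] abs_expected_loss_le
    by (intro order_trans[OF abs_ge_self abs_sum_mult_le]) auto
  then show "(1 / real m) * (\<Sum>i<m. \<sigma> i * expected_loss g i) \<le> (1 / real m) * (\<Sum>i<m. \<bar>L 0 (ys i)\<bar> + c * B)"
    by (rule mult_left_mono) simp
qed

lemma sign_expect_selection_eq_integral:
  assumes s: "\<And>\<sigma>. \<sigma> \<in> {..<m} \<rightarrow>\<^sub>E {-1, 1} \<Longrightarrow> s \<sigma> \<in> G"
  shows "sign_expect {..<m} (\<lambda>\<sigma>. (1 / real m) * (\<Sum>i<m. \<sigma> i * expected_loss (s \<sigma>) i))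
    = (\<integral>x'. sign_expect {..<m}
         (\<lambda>\<sigma>. (1 / real m) * (\<Sum>i<m. \<sigma> i * (p (xs i) x' * L (s \<sigma> x' (xs i)) (ys i)))) \<partial>M)"
proof -
  let ?F = "\<lambda>\<sigma> x'. (1 / real m) * (\<Sum>i<m. \<sigma> i * (p (xs i) x' * L (s \<sigma> x' (xs i)) (ys i)))"
  have "sign_expect {..<m} (\<lambda>\<sigma>. (1 / real m) * (\<Sum>i<m. \<sigma> i * expected_loss (s \<sigma>) i))
      = sign_expect {..<m} (\<lambda>\<sigma>. \<integral>x'. ?F \<sigma> x' \<partial>M)"
    using s by (intro sign_expect_cong) (simp add: expected_loss_eq_integral integrable_weighted_loss)
  also have "\<dots> = (\<integral>x'. sign_expect {..<m} (\<lambda>\<sigma>. ?F \<sigma> x') \<partial>M)"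
    using s by (intro integral_sign_expect[symmetric] integrable_mult_right
        Bochner_Integration.integrable_sum integrable_weighted_loss) auto
  finally show ?thesis .
qed

lemma sign_expect_selection_pointwise_le:
  assumes s: "\<And>\<sigma>. \<sigma> \<in> {..<m} \<rightarrow>\<^sub>E {-1, 1} \<Longrightarrow> s \<sigma> \<in> G" and x': "x' \<in> space M"
  shows "sign_expect {..<m} (\<lambda>\<sigma>. (1 / real m) * (\<Sum>i<m. \<sigma> i * (p (xs i) x' * L (s \<sigma> x' (xs i)) (ys i))))
    \<le> c * (ln (real m) + 1) * mod_rademacher Glocal xs m * sqrt ((1 / real m) * (\<Sum>i<m. (p (xs i) x')\<^sup>2))"
proof (rule sign_expect_weighted_lipschitz_le[OF m_pos c_nonneg, where B = B])
  show "h (xs i) \<in> {-B..B}" if "h \<in> Glocal" "i < m" for h i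
    using Glocal_bdd xs_in that by blast
  show "s \<sigma> x' \<in> Glocal" if "\<sigma> \<in> {..<m} \<rightarrow>\<^sub>E {-1, 1}" for \<sigma>
    using G_local s that x' by blast
  show "0 \<le> p (xs i) x'" if "i < m" for i
    using dens_nonneg xs_in that x' by blast
qed (rule L_lip)

lemma nn_integral_cmult_disj_factor:
  "(\<integral>\<^sup>+x'. ennreal C * ennreal (sqrt ((1 / real m) * (\<Sum>i<m. (p (xs i) x')\<^sup>2))) \<partial>M)
    = ennreal C * disj_factor M p xs m"
proof -
  have "(\<lambda>x'. \<Sum>i<m. (p (xs i) x')\<^sup>2) \<in> borel_measurable M"
    using dens_meas xs_in by (intro borel_measurable_sum borel_measurable_power) auto
  then have "(\<lambda>x'. ennreal (sqrt ((1 / real m) * (\<Sum>i<m. (p (xs i) x')\<^sup>2)))) \<in> borel_measurable M"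
    by measurable
  then show ?thesis
    unfolding disj_factor_def by (rule nn_integral_cmult)
qed

lemma sign_expect_selection_le:
  assumes s: "\<And>\<sigma>. \<sigma> \<in> {..<m} \<rightarrow>\<^sub>E {-1, 1} \<Longrightarrow> s \<sigma> \<in> G"
  shows "ennreal (sign_expect {..<m} (\<lambda>\<sigma>. (1 / real m) * (\<Sum>i<m. \<sigma> i * expected_loss (s \<sigma>) i)))
    \<le> ennreal (c * (ln (real m) + 1) * mod_rademacher Glocal xs m) * disj_factor M p xs m"
  (is "_ \<le> ennreal ?C * _")
proof -
  let ?\<rho> = "\<lambda>x'. sqrt ((1 / real m) * (\<Sum>i<m. (p (xs i) x')\<^sup>2))"
  have "ennreal (sign_expect {..<m} (\<lambda>\<sigma>. (1 / real m) * (\<Sum>i<m. \<sigma> i * expected_loss (s \<sigma>) i)))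
      \<le> (\<integral>\<^sup>+x'. ennreal (sign_expect {..<m}
            (\<lambda>\<sigma>. (1 / real m) * (\<Sum>i<m. \<sigma> i * (p (xs i) x' * L (s \<sigma> x' (xs i)) (ys i))))) \<partial>M)"
    by (subst sign_expect_selection_eq_integral[OF s]) (simp_all add: ennreal_integral_le_nn_integral)
  also have "\<dots> \<le> (\<integral>\<^sup>+x'. ennreal ?C * ennreal (?\<rho> x') \<partial>M)"
  proof (intro nn_integral_mono)
    fix x' assume "x' \<in> space M"
    then have "ennreal (sign_expect {..<m}
          (\<lambda>\<sigma>. (1 / real m) * (\<Sum>i<m. \<sigma> i * (p (xs i) x' * L (s \<sigma> x' (xs i)) (ys i)))))
        \<le> ennreal (?C * ?\<rho> x')"
      using sign_expect_selection_pointwise_le[OF s] by (intro ennreal_leI) simp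
    also have "\<dots> = ennreal ?C * ennreal (?\<rho> x')"
      by (rule ennreal_mult'') (simp add: sum_nonneg)
    finally show "ennreal (sign_expect {..<m}
          (\<lambda>\<sigma>. (1 / real m) * (\<Sum>i<m. \<sigma> i * (p (xs i) x' * L (s \<sigma> x' (xs i)) (ys i)))))
        \<le> ennreal ?C * ennreal (?\<rho> x')" .
  qed
  also have "\<dots> = ennreal ?C * disj_factor M p xs m"
    by (rule nn_integral_cmult_disj_factor)
  finally show ?thesis .
qed

end

theorem lemmaD1:
  fixes M :: "'a measure"
    and p :: "'a \<Rightarrow> 'a \<Rightarrow> real"
    and B c :: real
    and Glocal :: "('a \<Rightarrow> real) set"
    and G :: "('a \<Rightarrow> 'a \<Rightarrow> real) set"
    and L :: "real \<Rightarrow> real \<Rightarrow> real"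
    and m :: nat
    and xs :: "nat \<Rightarrow> 'a"
    and ys :: "nat \<Rightarrow> real"
  assumes B_pos: "B > 0"
    and dens_meas: "\<And>x. x \<in> space M \<Longrightarrow> p x \<in> borel_measurable M"
    and dens_nonneg: "\<And>x x'. x \<in> space M \<Longrightarrow> x' \<in> space M \<Longrightarrow> 0 \<le> p x x'"
    and dens_prob: "\<And>x. x \<in> space M \<Longrightarrow> prob_space (mir_nbhd M p x)"
    and Glocal_bdd: "\<And>h x. h \<in> Glocal \<Longrightarrow> x \<in> space M \<Longrightarrow> h x \<in> {-B..B}"
    and G_local: "\<And>g x'. g \<in> G \<Longrightarrow> x' \<in> space M \<Longrightarrow> g x' \<in> Glocal"
    and G_meas: "\<And>g x. g \<in> G \<Longrightarrow> x \<in> space M \<Longrightarrow> (\<lambda>x'. g x' x) \<in> borel_measurable M"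
    and G_ne: "G \<noteq> {}"
    and m_pos: "m \<ge> 1"
    and xs_in: "\<And>i. i < m \<Longrightarrow> xs i \<in> space M"
    and ys_in: "\<And>i. i < m \<Longrightarrow> ys i \<in> {-B..B}"
    and L_lip: "\<And>y' a b. a \<in> {-B..B} \<Longrightarrow> b \<in> {-B..B} \<Longrightarrow> \<bar>L a y' - L b y'\<bar> \<le> c * \<bar>a - b\<bar>"
  shows "ennreal (loss_rademacher M p L G xs ys m)
           \<le> ennreal (c * (ln (real m) + 1) * mod_rademacher Glocal xs m) * disj_factor M p xs m"
proof -
  interpret mirrored_loss_class M p B c Glocal G L m xs ys
    by (rule mirrored_loss_class.intro)
      (fact B_pos dens_meas dens_nonneg dens_prob Glocal_bdd G_local G_meas G_ne m_pos xs_in L_lip)+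
  show ?thesis
    unfolding loss_rademacher_eq
    by (rule ennreal_sign_expect_SUP_le_of_selections[OF finite_lessThan G_ne
          bdd_above_loss_correlation sign_expect_selection_le])
qed

end
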